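(* Let $\theta:R\to S$ be a surjective ring homomorphism with $\theta(1)=1$ (so $\theta(C(R))\subseteq C(S)$), and let $g(x)=\sum_{i=0}^n a_ix^i\in C(R)[x]$. If $R$ is weakly $g(x)$-$r$-clean, then $S$ is weakly $\theta'(g(x))$-$r$-clean, where $\theta'(g(x))=\sum_{i=0}^n\theta(a_i)x^i\in C(S)[x]$.
   Context: Rings are associative with identity; $C(R)$ is the center of $R$ and $Reg(R)=\{r: r=ryr \text{ for some } y\in R\}$. For a fixed $g(x)\in C(R)[x]$, an element $z\in R$ is weakly $g(x)$-$r$-clean if $z=r+s$ or $z=r-s$ with $r\in Reg(R)$ and $g(s)=0$; $R$ is weakly $g(x)$-$r$-clean if all its elements are. *)

theory Defs
  imports "HOL-Algebra.Ring" "HOL-Algebra.RingHom"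
begin

definition ring_center :: "('a, 'm) ring_scheme \<Rightarrow> 'a set" where
  "ring_center R = {c \<in> carrier R. \<forall>x \<in> carrier R. c \<otimes>\<^bsub>R\<^esub> x = x \<otimes>\<^bsub>R\<^esub> c}"

definition Reg :: "('a, 'm) ring_scheme \<Rightarrow> 'a set" where
  "Reg R = {r \<in> carrier R. \<exists>y \<in> carrier R. r = r \<otimes>\<^bsub>R\<^esub> y \<otimes>\<^bsub>R\<^esub> r}"

text \<open>A polynomial g(x) = sum_{i=0}^n a_i x^i is given by its coefficient
  function a and the bound n; evaluation at s.\<close>
definition poly_eval :: "('a, 'm) ring_scheme \<Rightarrow> (nat \<Rightarrow> 'a) \<Rightarrow> nat \<Rightarrow> 'a \<Rightarrow> 'a" where
  "poly_eval R a n s = (\<Oplus>\<^bsub>R\<^esub> i \<in> {..n}. a i \<otimes>\<^bsub>R\<^esub> (s [^]\<^bsub>R\<^esub> i))"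

definition weakly_g_r_clean_elem ::
  "('a, 'm) ring_scheme \<Rightarrow> (nat \<Rightarrow> 'a) \<Rightarrow> nat \<Rightarrow> 'a \<Rightarrow> bool" where
  "weakly_g_r_clean_elem R a n z \<longleftrightarrow>
     (\<exists>r \<in> Reg R. \<exists>s \<in> carrier R. poly_eval R a n s = \<zero>\<^bsub>R\<^esub> \<and>
        (z = r \<oplus>\<^bsub>R\<^esub> s \<or> z = r \<ominus>\<^bsub>R\<^esub> s))"

definition weakly_g_r_clean :: "('a, 'm) ring_scheme \<Rightarrow> (nat \<Rightarrow> 'a) \<Rightarrow> nat \<Rightarrow> bool" where
  "weakly_g_r_clean R a n \<longleftrightarrow> (\<forall>z \<in> carrier R. weakly_g_r_clean_elem R a n z)"

end

theory Submission
  imports Defs "HOL-Algebra.UnivPoly"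
begin

text \<open>Every ingredient of a weakly clean decomposition is transported by a ring homomorphism:
  regularity is an equation, and evaluating a polynomial commutes with the homomorphism.
  Surjectivity then reaches every element of the target. Centrality of the coefficients is
  not needed; only that they lie in the carrier.\<close>

context ring_hom_ring
begin

lemma hom_poly_eval:
  assumes "\<And>i. i \<le> n \<Longrightarrow> a i \<in> carrier R" and "s \<in> carrier R"
  shows "h (poly_eval R a n s) = poly_eval S (\<lambda>i. h (a i)) n (h s)"
proof -
  have "(\<lambda>i. a i \<otimes>\<^bsub>R\<^esub> s [^]\<^bsub>R\<^esub> i) \<in> {..n} \<rightarrow> carrier R"
    using assms by auto
  then have "h (poly_eval R a n s) = (\<Oplus>\<^bsub>S\<^esub> i \<in> {..n}. h (a i \<otimes>\<^bsub>R\<^esub> s [^]\<^bsub>R\<^esub> i))"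
    unfolding poly_eval_def by (simp add: hom_finsum comp_def)
  also have "\<dots> = poly_eval S (\<lambda>i. h (a i)) n (h s)"
    unfolding poly_eval_def
    using assms by (intro S.finsum_cong') (auto simp: hom_mult hom_nat_pow)
  finally show ?thesis .
qed

lemma hom_Reg:
  assumes "r \<in> Reg R"
  shows "h r \<in> Reg S"
proof -
  obtain y where r: "r \<in> carrier R" and y: "y \<in> carrier R" and "r = r \<otimes>\<^bsub>R\<^esub> y \<otimes>\<^bsub>R\<^esub> r"
    using assms by (auto simp: Reg_def)
  then have "h r = h r \<otimes>\<^bsub>S\<^esub> h y \<otimes>\<^bsub>S\<^esub> h r"
    by (metis R.m_closed hom_mult)
  with r y show ?thesis
    by (auto simp: Reg_def)
qed

lemma hom_weakly_g_r_clean_elem: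
  assumes "\<And>i. i \<le> n \<Longrightarrow> a i \<in> carrier R" and "weakly_g_r_clean_elem R a n x"
  shows "weakly_g_r_clean_elem S (\<lambda>i. h (a i)) n (h x)"
proof -
  obtain r s where r: "r \<in> Reg R" and s: "s \<in> carrier R"
    and root: "poly_eval R a n s = \<zero>\<^bsub>R\<^esub>"
    and x: "x = r \<oplus>\<^bsub>R\<^esub> s \<or> x = r \<ominus>\<^bsub>R\<^esub> s"
    using assms(2) by (auto simp: weakly_g_r_clean_elem_def)
  have rc: "r \<in> carrier R"
    using r by (simp add: Reg_def)
  have "poly_eval S (\<lambda>i. h (a i)) n (h s) = \<zero>\<^bsub>S\<^esub>"
    using hom_poly_eval[of n a s] assms(1) s root by simp
  moreover have "h x = h r \<oplus>\<^bsub>S\<^esub> h s \<or> h x = h r \<ominus>\<^bsub>S\<^esub> h s"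
    using x rc s by (auto simp: a_minus_def hom_add hom_a_inv)
  ultimately show ?thesis
    using hom_Reg[OF r] hom_closed[OF s] unfolding weakly_g_r_clean_elem_def by blast
qed

end

theorem proposition3p2:
  fixes R :: "('a, 'm) ring_scheme" and S :: "('b, 'n) ring_scheme"
    and \<theta> :: "'a \<Rightarrow> 'b" and a :: "nat \<Rightarrow> 'a" and n :: nat
  assumes "ring R" and "ring S"
    and "\<theta> \<in> ring_hom R S"
    and "\<theta> ` carrier R = carrier S"
    and "\<forall>i \<le> n. a i \<in> ring_center R"
    and "weakly_g_r_clean R a n"
  shows "weakly_g_r_clean S (\<lambda>i. \<theta> (a i)) n"
proof -
  interpret ring_hom_ring R S \<theta>
    using assms(1-3) by (simp add: ring_hom_ring_def ring_hom_ring_axioms_def)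
  have coeffs: "\<And>i. i \<le> n \<Longrightarrow> a i \<in> carrier R"
    using assms(5) by (auto simp: ring_center_def)
  show ?thesis
    unfolding weakly_g_r_clean_def
  proof
    fix z assume "z \<in> carrier S"
    then obtain x where "x \<in> carrier R" and "z = \<theta> x"
      using assms(4) by blast
    then show "weakly_g_r_clean_elem S (\<lambda>i. \<theta> (a i)) n z"
      using hom_weakly_g_r_clean_elem[OF coeffs] assms(6)
      by (simp add: weakly_g_r_clean_def)
  qed
qed

end
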